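(* Let $(A,\circ,[\cdot,\cdot])$ be a dual pre-Poisson algebra. There is a compatible pre-dual pre-Poisson algebra structure on $(A,\circ,[\cdot,\cdot])$ if and only if there exists an invertible $\mathcal{O}$-operator on $(A,\circ,[\cdot,\cdot])$ (associated to some representation).
   Context: Field $\mathbb{F}$ of characteristic $0$. A dual pre-Poisson algebra $(A,\circ,[\cdot,\cdot])$: $x\circ(y\circ z)=(x\circ y)\circ z=(y\circ x)\circ z$; $[x,[y,z]]=[[x,y],z]+[y,[x,z]]$; $[x,y\circ z]=[x,y]\circ z+y\circ[x,z]$; $[x\circ y,z]=x\circ[y,z]+y\circ[x,z]$; $[x,y]\circ z=-[y,x]\circ z$. A representation of it is $(V;l_\circ,r_\circ,l_{[\cdot,\cdot]},r_{[\cdot,\cdot]})$, with $V$ a vector space and linear maps $A\to\mathrm{End}(V)$ satisfying, for all $x,y\in A$: $r_\circ(x)r_\circ(y)=r_\circ(y\circ x)=l_\circ(y)r_\circ(x)=r_\circ(x)l_\circ(y)$; $l_\circ(x\circ y)=l_\circ(x)l_\circ(y)=l_\circ(y)l_\circ(x)$; $l_{[\cdot,\cdot]}([x,y])=l_{[\cdot,\cdot]}(x)l_{[\cdot,\cdot]}(y)-l_{[\cdot,\cdot]}(y)l_{[\cdot,\cdot]}(x)$; $r_{[\cdot,\cdot]}([x,y])=r_{[\cdot,\cdot]}(y)r_{[\cdot,\cdot]}(x)+l_{[\cdot,\cdot]}(x)r_{[\cdot,\cdot]}(y)$; $r_{[\cdot,\cdot]}(x)r_{[\cdot,\cdot]}(y)=-r_{[\cdot,\cdot]}(x)l_{[\cdot,\cdot]}(y)$;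 $r_{[\cdot,\cdot]}(x\circ y)=r_\circ(y)r_{[\cdot,\cdot]}(x)+l_\circ(x)r_{[\cdot,\cdot]}(y)$; $l_{[\cdot,\cdot]}(x)r_\circ(y)=r_\circ(y)l_{[\cdot,\cdot]}(x)+r_\circ([x,y])$; $l_{[\cdot,\cdot]}(x)l_\circ(y)=l_\circ([x,y])+l_\circ(y)l_{[\cdot,\cdot]}(x)$; $r_{[\cdot,\cdot]}(x)r_\circ(y)=r_\circ([y,x])+l_\circ(y)r_{[\cdot,\cdot]}(x)$; $l_{[\cdot,\cdot]}(x\circ y)=l_\circ(x)l_{[\cdot,\cdot]}(y)+l_\circ(y)l_{[\cdot,\cdot]}(x)$; $r_{[\cdot,\cdot]}(x)(l_\circ-r_\circ)(y)=0$; $r_\circ(x)(l_{[\cdot,\cdot]}+r_{[\cdot,\cdot]})(y)=0$; $l_\circ([x,y]+[y,x])=0$. An $\mathcal{O}$-operator on $(A,\circ,[\cdot,\cdot])$ associated to such a representation is a linear map $T:V\to A$ with $T(u)\circ T(v)=T(l_\circ(T(u))v+r_\circ(T(v))u)$ and $[T(u),T(v)]=T(l_{[\cdot,\cdot]}(T(u))v+r_{[\cdot,\cdot]}(T(v))u)$ for all $u,v\in V$. A pre-dual pre-Poisson algebra is a vector space with bilinear operations $\rhd,\lhd,\succ,\prec$ satisfying for all $x,y,z$: $x\lhd(y\lhd z+y\rhd z)=(x\lhd y)\lhd z=(y\rhd x)\lhd z=y\rhd(x\lhd z)$; $x\rhd(y\rhd z)=(x\lhd y+x\rhd y)\rhd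 z=(y\lhd x+y\rhd x)\rhd z$; $(x\prec y+x\succ y)\succ z=x\succ(y\succ z)-y\succ(x\succ z)$; $(x\succ y)\prec z=-(y\prec x)\prec z$; $x\prec(y\prec z+y\succ z)=(x\prec y)\prec z+y\succ(x\prec z)$; $x\prec(y\rhd z+y\lhd z)=(x\prec y)\lhd z+y\rhd(x\prec z)$; $x\succ(y\lhd z)=(x\succ y)\lhd z+y\lhd(x\succ z+x\prec z)$; $x\succ(y\rhd z)=(x\succ y+x\prec y)\rhd z+y\rhd(x\succ z)$; $(x\lhd y)\prec z=x\lhd(y\succ z+y\prec z)+y\rhd(x\prec z)$; $(x\rhd y+x\lhd y)\succ z=x\rhd(y\succ z)+y\rhd(x\succ z)$; $(x\rhd y-y\lhd x)\prec z=0$; $(x\succ y+y\prec x)\lhd z=0$; $(x\succ y+x\prec y+y\succ x+y\prec x)\rhd z=0$. A compatible pre-dual pre-Poisson algebra structure on $(A,\circ,[\cdot,\cdot])$ is a pre-dual pre-Poisson algebra $(A,\rhd,\lhd,\succ,\prec)$ on the same space with $x\circ y=x\rhd y+x\lhd y$ and $[x,y]=x\succ y+x\prec y$ for all $x,y$. *)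

theory Defs
  imports Complex_Main
begin

(* An algebra over the field 'k is modelled by a carrier type 'a with an
   abelian group structure and a scalar multiplication s making it a
   vector space (Vector_Spaces.vector_space). *)

definition bilinear_op :: "('k::field \<Rightarrow> 'a::ab_group_add \<Rightarrow> 'a) \<Rightarrow> ('a \<Rightarrow> 'a \<Rightarrow> 'a) \<Rightarrow> bool" where
  "bilinear_op s f \<longleftrightarrow> (\<forall>x. Vector_Spaces.linear s s (f x)) \<and> (\<forall>y. Vector_Spaces.linear s s (\<lambda>x. f x y))"

definition dual_pre_Poisson ::
  "('k::field \<Rightarrow> 'a::ab_group_add \<Rightarrow> 'a) \<Rightarrow> ('a \<Rightarrow> 'a \<Rightarrow> 'a) \<Rightarrow> ('a \<Rightarrow> 'a \<Rightarrow> 'a) \<Rightarrow> bool" where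
  "dual_pre_Poisson s mul br \<longleftrightarrow> vector_space s \<and> bilinear_op s mul \<and> bilinear_op s br \<and>
    (\<forall>x y z.
       mul x (mul y z) = mul (mul x y) z \<and> mul (mul x y) z = mul (mul y x) z \<and>
       br x (br y z) = br (br x y) z + br y (br x z) \<and>
       br x (mul y z) = mul (br x y) z + mul y (br x z) \<and>
       br (mul x y) z = mul x (br y z) + mul y (br x z) \<and>
       mul (br x y) z = - mul (br y x) z)"

(* Representation (V; l_o, r_o, l_br, r_br): V a vector space over the same field
   with scalar multiplication sV; each l_o, r_o, l_br, r_br is a linear map A \<rightarrow> End(V). *)
definition dpp_representation ::
  "('k::field \<Rightarrow> 'a::ab_group_add \<Rightarrow> 'a) \<Rightarrow> ('a \<Rightarrow> 'a \<Rightarrow> 'a) \<Rightarrow> ('a \<Rightarrow> 'a \<Rightarrow> 'a) \<Rightarrow>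
   ('k \<Rightarrow> 'v::ab_group_add \<Rightarrow> 'v) \<Rightarrow>
   ('a \<Rightarrow> 'v \<Rightarrow> 'v) \<Rightarrow> ('a \<Rightarrow> 'v \<Rightarrow> 'v) \<Rightarrow> ('a \<Rightarrow> 'v \<Rightarrow> 'v) \<Rightarrow> ('a \<Rightarrow> 'v \<Rightarrow> 'v) \<Rightarrow> bool" where
  "dpp_representation s mul br sV lm rm lb rb \<longleftrightarrow> vector_space sV \<and>
    (\<forall>x. Vector_Spaces.linear sV sV (lm x) \<and> Vector_Spaces.linear sV sV (rm x) \<and>
         Vector_Spaces.linear sV sV (lb x) \<and> Vector_Spaces.linear sV sV (rb x)) \<and>
    (\<forall>v. Vector_Spaces.linear s sV (\<lambda>x. lm x v) \<and> Vector_Spaces.linear s sV (\<lambda>x. rm x v) \<and>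
         Vector_Spaces.linear s sV (\<lambda>x. lb x v) \<and> Vector_Spaces.linear s sV (\<lambda>x. rb x v)) \<and>
    (\<forall>x y v.
       rm x (rm y v) = rm (mul y x) v \<and> rm (mul y x) v = lm y (rm x v) \<and> lm y (rm x v) = rm x (lm y v) \<and>
       lm (mul x y) v = lm x (lm y v) \<and> lm x (lm y v) = lm y (lm x v) \<and>
       lb (br x y) v = lb x (lb y v) - lb y (lb x v) \<and>
       rb (br x y) v = rb y (rb x v) + lb x (rb y v) \<and>
       rb x (rb y v) = - rb x (lb y v) \<and>
       rb (mul x y) v = rm y (rb x v) + lm x (rb y v) \<and>
       lb x (rm y v) = rm y (lb x v) + rm (br x y) v \<and>
       lb x (lm y v) = lm (br x y) v + lm y (lb x v) \<and>
       rb x (rm y v) = rm (br y x) v + lm y (rb x v) \<and>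
       lb (mul x y) v = lm x (lb y v) + lm y (lb x v) \<and>
       rb x (lm y v - rm y v) = 0 \<and>
       rm x (lb y v + rb y v) = 0 \<and>
       lm (br x y + br y x) v = 0)"

definition O_operator ::
  "('k::field \<Rightarrow> 'a::ab_group_add \<Rightarrow> 'a) \<Rightarrow> ('a \<Rightarrow> 'a \<Rightarrow> 'a) \<Rightarrow> ('a \<Rightarrow> 'a \<Rightarrow> 'a) \<Rightarrow>
   ('k \<Rightarrow> 'v::ab_group_add \<Rightarrow> 'v) \<Rightarrow>
   ('a \<Rightarrow> 'v \<Rightarrow> 'v) \<Rightarrow> ('a \<Rightarrow> 'v \<Rightarrow> 'v) \<Rightarrow> ('a \<Rightarrow> 'v \<Rightarrow> 'v) \<Rightarrow> ('a \<Rightarrow> 'v \<Rightarrow> 'v) \<Rightarrow>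
   ('v \<Rightarrow> 'a) \<Rightarrow> bool" where
  "O_operator s mul br sV lm rm lb rb T \<longleftrightarrow> Vector_Spaces.linear sV s T \<and>
    (\<forall>u v. mul (T u) (T v) = T (lm (T u) v + rm (T v) u) \<and>
           br (T u) (T v) = T (lb (T u) v + rb (T v) u))"

definition has_invertible_O_operator ::
  "('k::field \<Rightarrow> 'a::ab_group_add \<Rightarrow> 'a) \<Rightarrow> ('a \<Rightarrow> 'a \<Rightarrow> 'a) \<Rightarrow> ('a \<Rightarrow> 'a \<Rightarrow> 'a) \<Rightarrow>
   ('k \<Rightarrow> 'v::ab_group_add \<Rightarrow> 'v) \<Rightarrow> bool" where
  "has_invertible_O_operator s mul br sV \<longleftrightarrow>
    (\<exists>lm rm lb rb T. dpp_representation s mul br sV lm rm lb rb \<and>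
       O_operator s mul br sV lm rm lb rb T \<and> bij T)"

definition pre_dual_pre_Poisson ::
  "('k::field \<Rightarrow> 'a::ab_group_add \<Rightarrow> 'a) \<Rightarrow> ('a \<Rightarrow> 'a \<Rightarrow> 'a) \<Rightarrow> ('a \<Rightarrow> 'a \<Rightarrow> 'a) \<Rightarrow>
   ('a \<Rightarrow> 'a \<Rightarrow> 'a) \<Rightarrow> ('a \<Rightarrow> 'a \<Rightarrow> 'a) \<Rightarrow> bool" where
  "pre_dual_pre_Poisson s rh lh sc pr \<longleftrightarrow> vector_space s \<and>
    bilinear_op s rh \<and> bilinear_op s lh \<and> bilinear_op s sc \<and> bilinear_op s pr \<and>
    (\<forall>x y z.
       lh x (lh y z + rh y z) = lh (lh x y) z \<and> lh (lh x y) z = lh (rh y x) z \<and>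
       lh (rh y x) z = rh y (lh x z) \<and>
       rh x (rh y z) = rh (lh x y + rh x y) z \<and> rh (lh x y + rh x y) z = rh (lh y x + rh y x) z \<and>
       sc (pr x y + sc x y) z = sc x (sc y z) - sc y (sc x z) \<and>
       pr (sc x y) z = - pr (pr y x) z \<and>
       pr x (pr y z + sc y z) = pr (pr x y) z + sc y (pr x z) \<and>
       pr x (rh y z + lh y z) = lh (pr x y) z + rh y (pr x z) \<and>
       sc x (lh y z) = lh (sc x y) z + lh y (sc x z + pr x z) \<and>
       sc x (rh y z) = rh (sc x y + pr x y) z + rh y (sc x z) \<and>
       pr (lh x y) z = lh x (sc y z + pr y z) + rh y (pr x z) \<and>
       sc (rh x y + lh x y) z = rh x (sc y z) + rh y (sc x z) \<and>
       pr (rh x y - lh y x) z = 0 \<and>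
       lh (sc x y + pr y x) z = 0 \<and>
       rh (sc x y + pr x y + sc y x + pr y x) z = 0)"

definition has_compatible_pre_dual_pre_Poisson ::
  "('k::field \<Rightarrow> 'a::ab_group_add \<Rightarrow> 'a) \<Rightarrow> ('a \<Rightarrow> 'a \<Rightarrow> 'a) \<Rightarrow> ('a \<Rightarrow> 'a \<Rightarrow> 'a) \<Rightarrow> bool" where
  "has_compatible_pre_dual_pre_Poisson s mul br \<longleftrightarrow>
    (\<exists>rh lh sc pr. pre_dual_pre_Poisson s rh lh sc pr \<and>
       (\<forall>x y. mul x y = rh x y + lh x y \<and> br x y = sc x y + pr x y))"

end

theory Submission
  imports Defs
begin

(* A compatible structure (rh, lh, sc, pr) makes A a representation of the sum algebra
   (A, mul, br), with l_o x = rh x, r_o x v = lh v x, l_br x = sc x, r_br x v = pr v x,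
   and for this regular representation the identity is an O-operator.  Conversely, an
   O-operator T induces on V the operations rh u v = l_o (T u) v, lh u v = r_o (T v) u,
   sc u v = l_br (T u) v, pr u v = r_br (T v) u; the representation axioms are exactly
   what makes them pre-dual pre-Poisson, and T sends rh + lh to mul and sc + pr to br.
   If T is bijective, transporting this structure to A along T gives a compatible one. *)

lemma pre_dual_pre_Poisson_regular_representation:
  assumes "pre_dual_pre_Poisson s rh lh sc pr"
  shows "dpp_representation s (\<lambda>x y. rh x y + lh x y) (\<lambda>x y. sc x y + pr x y)
    s rh (\<lambda>x v. lh v x) sc (\<lambda>x v. pr v x)"
proof -
  have "vector_space s"
    and bil: "bilinear_op s rh" "bilinear_op s lh" "bilinear_op s sc" "bilinear_op s pr"
    and ax: "\<And>x y z.
       lh x (lh y z + rh y z) = lh (lh x y) z \<and> lh (lh x y) z = lh (rh y x) z \<and>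
       lh (rh y x) z = rh y (lh x z) \<and>
       rh x (rh y z) = rh (lh x y + rh x y) z \<and> rh (lh x y + rh x y) z = rh (lh y x + rh y x) z \<and>
       sc (pr x y + sc x y) z = sc x (sc y z) - sc y (sc x z) \<and>
       pr (sc x y) z = - pr (pr y x) z \<and>
       pr x (pr y z + sc y z) = pr (pr x y) z + sc y (pr x z) \<and>
       pr x (rh y z + lh y z) = lh (pr x y) z + rh y (pr x z) \<and>
       sc x (lh y z) = lh (sc x y) z + lh y (sc x z + pr x z) \<and>
       sc x (rh y z) = rh (sc x y + pr x y) z + rh y (sc x z) \<and>
       pr (lh x y) z = lh x (sc y z + pr y z) + rh y (pr x z) \<and>
       sc (rh x y + lh x y) z = rh x (sc y z) + rh y (sc x z) \<and>
       pr (rh x y - lh y x) z = 0 \<and>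
       lh (sc x y + pr y x) z = 0 \<and>
       rh (sc x y + pr x y + sc y x + pr y x) z = 0"
    using assms unfolding pre_dual_pre_Poisson_def by blast+
  show ?thesis
    unfolding dpp_representation_def
  proof (intro conjI allI)
    fix x y v
    show "lh (lh v y) x = lh v (rh y x + lh y x)"
      using ax[of v y x] by (simp add: add.commute)
    show "lh v (rh y x + lh y x) = rh y (lh v x)"
      using ax[of v y x] by (simp add: add.commute)
    show "rh y (lh v x) = lh (rh y v) x"
      using ax[of v y x] by simp
    show "rh (rh x y + lh x y) v = rh x (rh y v)"
      using ax[of x y v] by (simp add: add.commute)
    show "rh x (rh y v) = rh y (rh x v)"
      using ax[of x y v] ax[of y x v] by (simp add: add.commute)
    show "sc (sc x y + pr x y) v = sc x (sc y v) - sc y (sc x v)"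
      using ax[of x y v] by (simp add: add.commute)
    show "pr v (sc x y + pr x y) = pr (pr v x) y + sc x (pr v y)"
      using ax[of v x y] by (simp add: add.commute)
    show "pr (pr v y) x = - pr (sc y v) x"
      using ax[of y v x] by simp
    show "pr v (rh x y + lh x y) = lh (pr v x) y + rh x (pr v y)"
      using ax[of v x y] by (simp add: add.commute)
    show "sc x (lh v y) = lh (sc x v) y + lh v (sc x y + pr x y)"
      using ax[of x v y] by simp
    show "sc x (rh y v) = rh (sc x y + pr x y) v + rh y (sc x v)"
      using ax[of x y v] by simp
    show "pr (lh v y) x = lh v (sc y x + pr y x) + rh y (pr v x)"
      using ax[of v y x] by simp
    show "sc (rh x y + lh x y) v = rh x (sc y v) + rh y (sc x v)"
      using ax[of x y v] by simp
    show "pr (rh y v - lh v y) x = 0"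
      using ax[of y v x] by simp
    show "lh (sc y v + pr v y) x = 0"
      using ax[of y v x] by simp
    show "rh (sc x y + pr x y + (sc y x + pr y x)) v = 0"
      using ax[of x y v] by (simp add: add.assoc)
  qed (use \<open>vector_space s\<close> bil in \<open>simp_all add: bilinear_op_def\<close>)
qed

lemma has_compatible_imp_invertible_O_operator:
  assumes "has_compatible_pre_dual_pre_Poisson s mul br"
  shows "has_invertible_O_operator s mul br s"
proof -
  obtain rh lh sc pr where P: "pre_dual_pre_Poisson s rh lh sc pr"
    and "mul = (\<lambda>x y. rh x y + lh x y)" and "br = (\<lambda>x y. sc x y + pr x y)"
    using assms unfolding has_compatible_pre_dual_pre_Poisson_def by blast
  moreover have "Vector_Spaces.linear s s id"
    using P unfolding pre_dual_pre_Poisson_def by (blast intro: vector_space.linear_id)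
  ultimately have "O_operator s mul br s rh (\<lambda>x v. lh v x) sc (\<lambda>x v. pr v x) id"
    unfolding O_operator_def by simp
  with pre_dual_pre_Poisson_regular_representation[OF P] show ?thesis
    unfolding has_invertible_O_operator_def \<open>mul = _\<close> \<open>br = _\<close> by blast
qed

lemma bilinear_op_transfer:
  assumes "bilinear_op sV f" "Vector_Spaces.linear sV s T" "Vector_Spaces.linear s sV S"
  shows "bilinear_op s (\<lambda>x y. T (f (S x) (S y)))"
proof -
  have comp: "Vector_Spaces.linear s s (\<lambda>x. T (g (S x)))" if "Vector_Spaces.linear sV sV g" for g
    using Vector_Spaces.linear_compose[OF Vector_Spaces.linear_compose[OF assms(3) that] assms(2)]
    by (simp add: comp_def)
  show ?thesis
    unfolding bilinear_op_def
  proof (intro conjI allI)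
    show "Vector_Spaces.linear s s (\<lambda>y. T (f (S x) (S y)))" for x
      using assms(1) by (intro comp) (simp add: bilinear_op_def)
    show "Vector_Spaces.linear s s (\<lambda>x. T (f (S x) (S y)))" for y
      using assms(1) comp[of "\<lambda>a. f a (S y)"] by (simp add: bilinear_op_def)
  qed
qed

lemma pre_dual_pre_Poisson_transfer:
  assumes P: "pre_dual_pre_Poisson sV rh lh sc pr"
    and linT: "Vector_Spaces.linear sV s T" and "bij T"
  shows "pre_dual_pre_Poisson s
    (\<lambda>x y. T (rh (inv T x) (inv T y))) (\<lambda>x y. T (lh (inv T x) (inv T y)))
    (\<lambda>x y. T (sc (inv T x) (inv T y))) (\<lambda>x y. T (pr (inv T x) (inv T y)))"
proof -
  interpret T: Vector_Spaces.linear sV s T by (fact linT)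
  have "Vector_Spaces.linear s sV (inv T)"
    using bij_module_hom_imp_inv_module_hom[of sV s T] \<open>bij T\<close> linT
    unfolding module_hom_iff_linear by blast
  then have bil: "bilinear_op sV f \<Longrightarrow> bilinear_op s (\<lambda>x y. T (f (inv T x) (inv T y)))" for f
    using linT by (blast intro: bilinear_op_transfer)
  have inj: "inj T" using \<open>bij T\<close> by (rule bij_is_inj)
  have T_eq_0: "T a = 0 \<longleftrightarrow> a = 0" for a
    using inj by (metis T.zero injD)
  show ?thesis
    using P unfolding pre_dual_pre_Poisson_def
  proof (elim conjE, intro conjI allI bil)
    show "vector_space s" using linT by (simp add: Vector_Spaces.linear_iff)
    \<comment> \<open>Pushing T outwards through the group operations and cancelling inv T (T _) turns
        each identity at x, y, z into T applied to the identity at inv T x, inv T y, inv T z.\<close>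
  qed (simp_all add: inv_f_f[OF inj] inj_eq[OF inj] T_eq_0
                     T.add[symmetric] T.diff[symmetric] T.neg[symmetric])
qed

lemma O_operator_induced_pre_dual_pre_Poisson:
  assumes R: "dpp_representation s mul br sV lm rm lb rb"
    and O: "O_operator s mul br sV lm rm lb rb T"
  shows "pre_dual_pre_Poisson sV
    (\<lambda>u v. lm (T u) v) (\<lambda>u v. rm (T v) u) (\<lambda>u v. lb (T u) v) (\<lambda>u v. rb (T v) u)"
proof -
  have linT: "Vector_Spaces.linear sV s T"
    and mul_T: "\<And>u v. T (lm (T u) v + rm (T v) u) = mul (T u) (T v)"
    and br_T: "\<And>u v. T (lb (T u) v + rb (T v) u) = br (T u) (T v)"
    using O unfolding O_operator_def by simp_all
  interpret T: Vector_Spaces.linear sV s T by (fact linT)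
  have mul_T': "T (rm (T v) u + lm (T u) v) = mul (T u) (T v)" for u v
    using mul_T by (simp add: add.commute)
  have br_T': "T (rb (T v) u + lb (T u) v) = br (T u) (T v)" for u v
    using br_T by (simp add: add.commute)
  have lin_after_T: "Vector_Spaces.linear sV sV (\<lambda>u. f (T u))" if "Vector_Spaces.linear s sV f" for f
    using Vector_Spaces.linear_compose[OF linT that] by (simp add: comp_def)
  have bil: "bilinear_op sV (\<lambda>u v. f (T u) v)" "bilinear_op sV (\<lambda>u v. f (T v) u)"
    if "\<And>x. Vector_Spaces.linear sV sV (f x)" "\<And>v. Vector_Spaces.linear s sV (\<lambda>x. f x v)" for f
  proof -
    have "Vector_Spaces.linear sV sV (\<lambda>u. f (T u) v)" for v
      using lin_after_T[OF that(2)] .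
    with that(1) show "bilinear_op sV (\<lambda>u v. f (T u) v)" "bilinear_op sV (\<lambda>u v. f (T v) u)"
      unfolding bilinear_op_def by simp_all
  qed
  have "vector_space sV" and ops_lin:
      "\<And>x. Vector_Spaces.linear sV sV (lm x) \<and> Vector_Spaces.linear sV sV (rm x) \<and>
            Vector_Spaces.linear sV sV (lb x) \<and> Vector_Spaces.linear sV sV (rb x)"
      "\<And>v. Vector_Spaces.linear s sV (\<lambda>x. lm x v) \<and> Vector_Spaces.linear s sV (\<lambda>x. rm x v) \<and>
            Vector_Spaces.linear s sV (\<lambda>x. lb x v) \<and> Vector_Spaces.linear s sV (\<lambda>x. rb x v)"
    and ax: "\<And>x y v.
       rm x (rm y v) = rm (mul y x) v \<and> rm (mul y x) v = lm y (rm x v) \<and> lm y (rm x v) = rm x (lm y v) \<and>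
       lm (mul x y) v = lm x (lm y v) \<and> lm x (lm y v) = lm y (lm x v) \<and>
       lb (br x y) v = lb x (lb y v) - lb y (lb x v) \<and>
       rb (br x y) v = rb y (rb x v) + lb x (rb y v) \<and>
       rb x (rb y v) = - rb x (lb y v) \<and>
       rb (mul x y) v = rm y (rb x v) + lm x (rb y v) \<and>
       lb x (rm y v) = rm y (lb x v) + rm (br x y) v \<and>
       lb x (lm y v) = lm (br x y) v + lm y (lb x v) \<and>
       rb x (rm y v) = rm (br y x) v + lm y (rb x v) \<and>
       lb (mul x y) v = lm x (lb y v) + lm y (lb x v) \<and>
       rb x (lm y v - rm y v) = 0 \<and>
       rm x (lb y v + rb y v) = 0 \<and>
       lm (br x y + br y x) v = 0"
    using R unfolding dpp_representation_def by blast+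
  show ?thesis
    unfolding pre_dual_pre_Poisson_def
  proof (intro conjI allI bil)
    fix u v w
    show "rm (T (rm (T w) v + lm (T v) w)) u = rm (T w) (rm (T v) u)"
      using ax[of "T w" "T v" u] by (simp add: mul_T')
    show "rm (T w) (rm (T v) u) = rm (T w) (lm (T v) u)"
      using ax[of "T w" "T v" u] by simp
    show "rm (T w) (lm (T v) u) = lm (T v) (rm (T w) u)"
      using ax[of "T w" "T v" u] by simp
    show "lm (T u) (lm (T v) w) = lm (T (rm (T v) u + lm (T u) v)) w"
      using ax[of "T u" "T v" w] by (simp add: mul_T')
    show "lm (T (rm (T v) u + lm (T u) v)) w = lm (T (rm (T u) v + lm (T v) u)) w"
      using ax[of "T u" "T v" w] ax[of "T v" "T u" w] by (simp add: mul_T')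
    show "lb (T (rb (T v) u + lb (T u) v)) w = lb (T u) (lb (T v) w) - lb (T v) (lb (T u) w)"
      using ax[of "T u" "T v" w] by (simp add: br_T')
    show "rb (T w) (lb (T u) v) = - rb (T w) (rb (T u) v)"
      using ax[of "T w" "T u" v] by simp
    show "rb (T (rb (T w) v + lb (T v) w)) u = rb (T w) (rb (T v) u) + lb (T v) (rb (T w) u)"
      using ax[of "T v" "T w" u] by (simp add: br_T')
    show "rb (T (lm (T v) w + rm (T w) v)) u = rm (T w) (rb (T v) u) + lm (T v) (rb (T w) u)"
      using ax[of "T v" "T w" u] by (simp add: mul_T)
    show "lb (T u) (rm (T w) v) = rm (T w) (lb (T u) v) + rm (T (lb (T u) w + rb (T w) u)) v"
      using ax[of "T u" "T w" v] by (simp add: br_T)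
    show "lb (T u) (lm (T v) w) = lm (T (lb (T u) v + rb (T v) u)) w + lm (T v) (lb (T u) w)"
      using ax[of "T u" "T v" w] by (simp add: br_T)
    show "rb (T w) (rm (T v) u) = rm (T (lb (T v) w + rb (T w) v)) u + lm (T v) (rb (T w) u)"
      using ax[of "T w" "T v" u] by (simp add: br_T)
    show "lb (T (lm (T u) v + rm (T v) u)) w = lm (T u) (lb (T v) w) + lm (T v) (lb (T u) w)"
      using ax[of "T u" "T v" w] by (simp add: mul_T)
    show "rb (T w) (lm (T u) v - rm (T u) v) = 0"
      using ax[of "T w" "T u" v] by simp
    show "rm (T w) (lb (T u) v + rb (T u) v) = 0"
      using ax[of "T w" "T u" v] by simp
    have "T (lb (T u) v + rb (T v) u + lb (T v) u + rb (T u) v) = br (T u) (T v) + br (T v) (T u)"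
      unfolding br_T[symmetric] by (simp add: T.add add.assoc)
    then show "lm (T (lb (T u) v + rb (T v) u + lb (T v) u + rb (T u) v)) w = 0"
      using ax[of "T u" "T v" w] by simp
  qed (use \<open>vector_space sV\<close> ops_lin in blast)+
qed

lemma has_invertible_O_operator_imp_compatible:
  assumes "has_invertible_O_operator s mul br sV"
  shows "has_compatible_pre_dual_pre_Poisson s mul br"
proof -
  obtain lm rm lb rb T where R: "dpp_representation s mul br sV lm rm lb rb"
      and O: "O_operator s mul br sV lm rm lb rb T" and "bij T"
    using assms unfolding has_invertible_O_operator_def by blast
  have linT: "Vector_Spaces.linear sV s T"
    and mul_T: "\<And>u v. mul (T u) (T v) = T (lm (T u) v + rm (T v) u)"
    and br_T: "\<And>u v. br (T u) (T v) = T (lb (T u) v + rb (T v) u)"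
    using O unfolding O_operator_def by simp_all
  interpret T: Vector_Spaces.linear sV s T by (fact linT)
  have T_inv: "T (inv T x) = x" for x
    using \<open>bij T\<close> by (simp add: bij_is_surj surj_f_inv_f)
  have "pre_dual_pre_Poisson s (\<lambda>x y. T (lm x (inv T y))) (\<lambda>x y. T (rm y (inv T x)))
      (\<lambda>x y. T (lb x (inv T y))) (\<lambda>x y. T (rb y (inv T x)))"
    using pre_dual_pre_Poisson_transfer[OF O_operator_induced_pre_dual_pre_Poisson[OF R O] linT \<open>bij T\<close>]
    by (simp add: T_inv)
  moreover have "mul x y = T (lm x (inv T y)) + T (rm y (inv T x))"
      and "br x y = T (lb x (inv T y)) + T (rb y (inv T x))" for x y
    using mul_T[of "inv T x" "inv T y"] br_T[of "inv T x" "inv T y"] by (simp_all add: T_inv T.add)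
  ultimately show ?thesis
    unfolding has_compatible_pre_dual_pre_Poisson_def by blast
qed

theorem theorem3p29:
  fixes s :: "'k::field_char_0 \<Rightarrow> 'a::ab_group_add \<Rightarrow> 'a"
    and mul br :: "'a \<Rightarrow> 'a \<Rightarrow> 'a"
    and sV :: "'k \<Rightarrow> 'v::ab_group_add \<Rightarrow> 'v"
  assumes "dual_pre_Poisson s mul br"
  shows "(has_compatible_pre_dual_pre_Poisson s mul br \<longleftrightarrow> has_invertible_O_operator s mul br s)
         \<and> (has_invertible_O_operator s mul br sV \<longrightarrow> has_compatible_pre_dual_pre_Poisson s mul br)"
  using has_compatible_imp_invertible_O_operator[of s mul br]
    has_invertible_O_operator_imp_compatible[of s mul br s]
    has_invertible_O_operator_imp_compatible[of s mul br sV]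
  by (intro conjI iffI impI)

end
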